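(* Let $L_1=\langle\mathbf{A}_1,F_1\rangle$ and $L_2=\langle\mathbf{A}_2,F_2\rangle$ be two distinct finite matrix logics over the same signature $\Theta$ such that $\mathbf{A}_2$ is a subalgebra of $\mathbf{A}_1$ and $F_2=F_1\cap A_2$. Assume: (1) $A_1=\{0,1,a_1,\dots,a_k,a_{k+1},\dots,a_n\}$ and $A_2=\{0,1,a_1,\dots,a_k\}$ (all listed elements distinct), $0\notin F_1$, $1\in F_2$, and $\{0,1\}$ is (the universe of) a subalgebra of $\mathbf{A}_2$; (2) there are formulas $\top(p)$ and $\bot(p)$ in $\mathcal{L}(\Theta)$ containing at most the variable $p$ such that $e(\top(p))=1$ and $e(\bot(p))=0$ for every evaluation $e$ into $\mathbf{A}_1$; (3) for every $k+1\le i\le n$ and every $1\le j\le n$ with $i\neq j$ there is a formula $\alpha^i_j(p)$ containing at most the variable $p$ such that for every evaluation $e$ into $\mathbf{A}_1$, $e(p)=a_i$ implies $e(\alpha^i_j(p))=a_j$. Then $L_1$ is maximal with respect to $L_2$.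
   Context: $\mathcal{L}(\Theta)$ denotes the algebra of formulas over a propositional signature $\Theta$ generated by a countable set of propositional variables. A logical matrix is a pair $\langle\mathbf{A},F\rangle$ with $\mathbf{A}$ an algebra over $\Theta$ and $\emptyset\neq F\subseteq A$. The matrix logic $L=\langle\mathbf{A},F\rangle$ has consequence relation: $\Gamma\vdash_L\varphi$ iff for every homomorphism $e:\mathcal{L}(\Theta)\to\mathbf{A}$ (evaluation), $e[\Gamma]\subseteq F$ implies $e(\varphi)\in F$. A logic $L_1$ is a proper sublogic of $L_2$ (same signature) if ${\vdash_{L_1}}\subsetneq{\vdash_{L_2}}$. For a formula $\varphi$, $L_1^+$ denotes the logic with $\Gamma\vdash_{L_1^+}\psi$ iff $\Gamma\cup\{\sigma(\varphi):\sigma$ a substitution$\}\vdash_{L_1}\psi$. $L_1$ is maximal with respect to $L_2$ if $L_1$ is a proper sublogic of $L_2$ and for every formula $\varphi$ with $\vdash_{L_2}\varphi$ but $\nvdash_{L_1}\varphi$, the logic $L_1^+$ obtained by adding $\varphi$ coincides with $L_2$. *)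

theory Defs
  imports Main
begin

datatype 'f fm = Var nat | App 'f "'f fm list"

fun wf_fm :: "('f \<Rightarrow> nat) \<Rightarrow> 'f fm \<Rightarrow> bool" where
  "wf_fm ar (Var n) = True"
| "wf_fm ar (App f xs) = (length xs = ar f \<and> (\<forall>x\<in>set xs. wf_fm ar x))"

fun vars :: "'f fm \<Rightarrow> nat set" where
  "vars (Var n) = {n}"
| "vars (App f xs) = (\<Union>x\<in>set xs. vars x)"

fun eval :: "('f \<Rightarrow> 'a list \<Rightarrow> 'a) \<Rightarrow> (nat \<Rightarrow> 'a) \<Rightarrow> 'f fm \<Rightarrow> 'a" where
  "eval ops v (Var n) = v n"
| "eval ops v (App f xs) = ops f (map (eval ops v) xs)"

fun subst :: "(nat \<Rightarrow> 'f fm) \<Rightarrow> 'f fm \<Rightarrow> 'f fm" where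
  "subst \<sigma> (Var n) = \<sigma> n"
| "subst \<sigma> (App f xs) = App f (map (subst \<sigma>) xs)"

text \<open>A is (the universe of) an algebra over the signature with operations ops.
  A subalgebra of it is any subset closed under the same operations.\<close>
definition closed_alg :: "('f \<Rightarrow> nat) \<Rightarrow> ('f \<Rightarrow> 'a list \<Rightarrow> 'a) \<Rightarrow> 'a set \<Rightarrow> bool" where
  "closed_alg ar ops A \<longleftrightarrow> A \<noteq> {} \<and>
     (\<forall>f xs. length xs = ar f \<longrightarrow> set xs \<subseteq> A \<longrightarrow> ops f xs \<in> A)"

definition cons_rel :: "('f \<Rightarrow> nat) \<Rightarrow> ('f \<Rightarrow> 'a list \<Rightarrow> 'a) \<Rightarrow> 'a set \<Rightarrow> 'a set
    \<Rightarrow> ('f fm set \<times> 'f fm) set" where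
  "cons_rel ar ops A F = {(\<Gamma>, \<phi>). (\<forall>\<gamma>\<in>\<Gamma>. wf_fm ar \<gamma>) \<and> wf_fm ar \<phi> \<and>
     (\<forall>v. (\<forall>n. v n \<in> A) \<longrightarrow> (\<forall>\<gamma>\<in>\<Gamma>. eval ops v \<gamma> \<in> F) \<longrightarrow> eval ops v \<phi> \<in> F)}"

definition cons_plus :: "('f \<Rightarrow> nat) \<Rightarrow> ('f \<Rightarrow> 'a list \<Rightarrow> 'a) \<Rightarrow> 'a set \<Rightarrow> 'a set
    \<Rightarrow> 'f fm \<Rightarrow> ('f fm set \<times> 'f fm) set" where
  "cons_plus ar ops A F \<phi> = {(\<Gamma>, \<psi>). (\<forall>\<gamma>\<in>\<Gamma>. wf_fm ar \<gamma>) \<and> wf_fm ar \<psi> \<and>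
     (\<Gamma> \<union> {subst \<sigma> \<phi> | \<sigma>. \<forall>n. wf_fm ar (\<sigma> n)}, \<psi>) \<in> cons_rel ar ops A F}"

definition maximal_wrt :: "('f \<Rightarrow> nat) \<Rightarrow> ('f \<Rightarrow> 'a list \<Rightarrow> 'a) \<Rightarrow> 'a set \<Rightarrow> 'a set
    \<Rightarrow> 'a set \<Rightarrow> 'a set \<Rightarrow> bool" where
  "maximal_wrt ar ops A1 F1 A2 F2 \<longleftrightarrow>
     cons_rel ar ops A1 F1 \<subset> cons_rel ar ops A2 F2 \<and>
     (\<forall>\<phi>. wf_fm ar \<phi> \<longrightarrow> ({}, \<phi>) \<in> cons_rel ar ops A2 F2 \<longrightarrow>
        ({}, \<phi>) \<notin> cons_rel ar ops A1 F1 \<longrightarrow>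
        cons_plus ar ops A1 F1 \<phi> = cons_rel ar ops A2 F2)"

end

theory Submission
  imports Defs
begin

text \<open>Every element of A1 outside A2 generates all of A1 by one-variable formulas. Hence an
  evaluation into A1 that takes such a value somewhere can be composed with a substitution to
  yield any evaluation into A1 whatsoever; so if all substitution instances of a formula
  \<open>\<phi>\<close> that fails in L1 hold under it, it must take its values in A2, where
  L2 takes over. Adding \<open>\<phi>\<close> to L1 therefore yields exactly L2.\<close>

lemma eval_subst: "eval ops v (subst \<sigma> t) = eval ops (\<lambda>x. eval ops v (\<sigma> x)) t"
  by (induction t) (simp_all add: comp_def cong: map_cong)

lemma wf_subst: "wf_fm ar t \<Longrightarrow> \<forall>n. wf_fm ar (\<sigma> n) \<Longrightarrow> wf_fm ar (subst \<sigma> t)"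
  by (induction t) auto

lemma eval_in_closed_alg:
  assumes "closed_alg ar ops A" "wf_fm ar t" "\<forall>n. v n \<in> A"
  shows "eval ops v t \<in> A"
  using assms(2)
proof (induction t)
  case (App f xs)
  then have "length (map (eval ops v) xs) = ar f" "set (map (eval ops v) xs) \<subseteq> A"
    by auto
  then show ?case
    using assms(1) unfolding closed_alg_def by simp
qed (use assms(3) in simp)

lemma cons_relD:
  "(\<Gamma>, \<psi>) \<in> cons_rel ar ops A F \<Longrightarrow> \<forall>n. v n \<in> A \<Longrightarrow> \<forall>\<gamma>\<in>\<Gamma>. eval ops v \<gamma> \<in> F \<Longrightarrow>
    eval ops v \<psi> \<in> F"
  by (simp add: cons_rel_def)

definition generates :: "('f \<Rightarrow> nat) \<Rightarrow> ('f \<Rightarrow> 'a list \<Rightarrow> 'a) \<Rightarrow> 'a set \<Rightarrow> 'a \<Rightarrow> bool" where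
  "generates ar ops A b \<longleftrightarrow> (\<forall>c\<in>A. \<exists>t. wf_fm ar t \<and> eval ops (\<lambda>_. b) t = c)"

lemma generates_realizes_valuation:
  assumes "generates ar ops A (v m)" "\<forall>x. w x \<in> A"
  obtains \<sigma> where "\<forall>x. wf_fm ar (\<sigma> x)" "\<forall>x. eval ops v (\<sigma> x) = w x"
proof -
  have "\<forall>x. \<exists>t. wf_fm ar t \<and> eval ops (\<lambda>_. v m) t = w x"
    using assms unfolding generates_def by blast
  then obtain t where t: "\<forall>x. wf_fm ar (t x) \<and> eval ops (\<lambda>_. v m) (t x) = w x"
    by metis
  show thesis
  proof (rule that[of "\<lambda>x. subst (\<lambda>_. Var m) (t x)"])
    show "\<forall>x. wf_fm ar (subst (\<lambda>_. Var m) (t x))"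
      using t by (simp add: wf_subst)
    show "\<forall>x. eval ops v (subst (\<lambda>_. Var m) (t x)) = w x"
      using t by (simp add: eval_subst)
  qed
qed

lemma cons_rel_subalgebra:
  assumes "A2 \<subseteq> A1" "closed_alg ar ops A2" "F2 = F1 \<inter> A2"
  shows "cons_rel ar ops A1 F1 \<subseteq> cons_rel ar ops A2 F2"
proof (rule subrelI)
  fix \<Gamma> \<psi>
  assume "(\<Gamma>, \<psi>) \<in> cons_rel ar ops A1 F1"
  then have wf: "\<forall>\<gamma>\<in>\<Gamma>. wf_fm ar \<gamma>" "wf_fm ar \<psi>"
    and L1: "\<And>v. \<forall>n. v n \<in> A1 \<Longrightarrow> \<forall>\<gamma>\<in>\<Gamma>. eval ops v \<gamma> \<in> F1 \<Longrightarrow> eval ops v \<psi> \<in> F1"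
    by (auto simp: cons_rel_def)
  have "eval ops v \<psi> \<in> F2" if v: "\<forall>n. v n \<in> A2" and \<Gamma>: "\<forall>\<gamma>\<in>\<Gamma>. eval ops v \<gamma> \<in> F2" for v
  proof -
    have "eval ops v \<psi> \<in> F1"
      using L1 v \<Gamma> assms(1,3) by blast
    moreover have "eval ops v \<psi> \<in> A2"
      using eval_in_closed_alg[OF assms(2) wf(2) v] .
    ultimately show ?thesis
      using assms(3) by blast
  qed
  then show "(\<Gamma>, \<psi>) \<in> cons_rel ar ops A2 F2"
    using wf by (simp add: cons_rel_def)
qed

lemma cons_plus_subset_cons_rel:
  assumes "A2 \<subseteq> A1" "closed_alg ar ops A2" "F2 = F1 \<inter> A2" "({}, \<phi>) \<in> cons_rel ar ops A2 F2"
  shows "cons_plus ar ops A1 F1 \<phi> \<subseteq> cons_rel ar ops A2 F2"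
proof (rule subrelI)
  fix \<Gamma> \<psi>
  assume "(\<Gamma>, \<psi>) \<in> cons_plus ar ops A1 F1 \<phi>"
  then have wf: "\<forall>\<gamma>\<in>\<Gamma>. wf_fm ar \<gamma>" "wf_fm ar \<psi>"
    and L1: "(\<Gamma> \<union> {subst \<sigma> \<phi> | \<sigma>. \<forall>n. wf_fm ar (\<sigma> n)}, \<psi>) \<in> cons_rel ar ops A1 F1"
    by (simp_all add: cons_plus_def)
  have "eval ops v \<psi> \<in> F2" if v: "\<forall>n. v n \<in> A2" and \<Gamma>: "\<forall>\<gamma>\<in>\<Gamma>. eval ops v \<gamma> \<in> F2" for v
  proof -
    have "eval ops v \<gamma> \<in> F1" if inst: "\<gamma> \<in> {subst \<sigma> \<phi> | \<sigma>. \<forall>n. wf_fm ar (\<sigma> n)}" for \<gamma>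
    proof -
      obtain \<sigma> where \<gamma>: "\<gamma> = subst \<sigma> \<phi>" and "\<forall>n. wf_fm ar (\<sigma> n)"
        using inst by blast
      then have "\<forall>n. eval ops v (\<sigma> n) \<in> A2"
        using eval_in_closed_alg[OF assms(2) _ v] by blast
      then show ?thesis
        using assms(3,4) by (simp add: \<gamma> cons_rel_def eval_subst)
    qed
    then have "\<forall>\<gamma>\<in>\<Gamma> \<union> {subst \<sigma> \<phi> | \<sigma>. \<forall>n. wf_fm ar (\<sigma> n)}. eval ops v \<gamma> \<in> F1"
      using \<Gamma> assms(3) by blast
    moreover have "\<forall>n. v n \<in> A1"
      using v assms(1) by blast
    ultimately have "eval ops v \<psi> \<in> F1"
      using cons_relD[OF L1] by blast
    moreover have "eval ops v \<psi> \<in> A2"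
      using eval_in_closed_alg[OF assms(2) wf(2) v] .
    ultimately show ?thesis
      using assms(3) by blast
  qed
  then show "(\<Gamma>, \<psi>) \<in> cons_rel ar ops A2 F2"
    using wf by (simp add: cons_rel_def)
qed

lemma valuation_in_subalgebra_if_instances_hold:
  assumes gen: "\<forall>c\<in>A1 - A2. generates ar ops A1 c"
    and refuted: "wf_fm ar \<phi>" "({}, \<phi>) \<notin> cons_rel ar ops A1 F1"
    and v: "\<forall>n. v n \<in> A1"
    and instances: "\<forall>\<sigma>. (\<forall>n. wf_fm ar (\<sigma> n)) \<longrightarrow> eval ops v (subst \<sigma> \<phi>) \<in> F1"
  shows "v m \<in> A2"
proof (rule ccontr)
  assume "v m \<notin> A2"
  then have "generates ar ops A1 (v m)"
    using gen v by blast
  obtain w where w: "\<forall>x. w x \<in> A1" and "eval ops w \<phi> \<notin> F1"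
    using refuted by (auto simp: cons_rel_def)
  moreover obtain \<sigma> where "\<forall>x. wf_fm ar (\<sigma> x)" "\<forall>x. eval ops v (\<sigma> x) = w x"
    using generates_realizes_valuation[of ar ops A1 v m w, OF \<open>generates ar ops A1 (v m)\<close> w] .
  ultimately show False
    using instances by (auto simp: eval_subst)
qed

lemma cons_rel_subset_cons_plus:
  assumes "closed_alg ar ops A2" "F2 = F1 \<inter> A2"
    and gen: "\<forall>c\<in>A1 - A2. generates ar ops A1 c"
    and refuted: "wf_fm ar \<phi>" "({}, \<phi>) \<notin> cons_rel ar ops A1 F1"
  shows "cons_rel ar ops A2 F2 \<subseteq> cons_plus ar ops A1 F1 \<phi>"
proof (rule subrelI)
  fix \<Gamma> \<psi>
  assume "(\<Gamma>, \<psi>) \<in> cons_rel ar ops A2 F2"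
  then have wf: "\<forall>\<gamma>\<in>\<Gamma>. wf_fm ar \<gamma>" "wf_fm ar \<psi>"
    and L2: "\<And>v. \<forall>n. v n \<in> A2 \<Longrightarrow> \<forall>\<gamma>\<in>\<Gamma>. eval ops v \<gamma> \<in> F2 \<Longrightarrow> eval ops v \<psi> \<in> F2"
    by (auto simp: cons_rel_def)
  have "eval ops v \<psi> \<in> F1"
    if v: "\<forall>n. v n \<in> A1"
      and hyps: "\<forall>\<gamma>\<in>\<Gamma> \<union> {subst \<sigma> \<phi> | \<sigma>. \<forall>n. wf_fm ar (\<sigma> n)}. eval ops v \<gamma> \<in> F1"
    for v
  proof -
    have \<Gamma>: "\<forall>\<gamma>\<in>\<Gamma>. eval ops v \<gamma> \<in> F1"
      and instances: "\<forall>\<sigma>. (\<forall>n. wf_fm ar (\<sigma> n)) \<longrightarrow> eval ops v (subst \<sigma> \<phi>) \<in> F1"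
      using hyps by blast+
    have v2: "\<forall>n. v n \<in> A2"
      using valuation_in_subalgebra_if_instances_hold[OF gen refuted v instances] by blast
    then have "\<forall>\<gamma>\<in>\<Gamma>. eval ops v \<gamma> \<in> F2"
      using \<Gamma> wf assms(2) eval_in_closed_alg[OF assms(1)] by blast
    then show ?thesis
      using L2 v2 assms(2) by blast
  qed
  then show "(\<Gamma>, \<psi>) \<in> cons_plus ar ops A1 F1 \<phi>"
    using wf by (auto simp: cons_plus_def cons_rel_def wf_subst[OF refuted(1)])
qed

lemma maximal_wrt_if_outside_elements_generate:
  assumes "A2 \<subseteq> A1" "closed_alg ar ops A2" "F2 = F1 \<inter> A2"
    and "cons_rel ar ops A1 F1 \<noteq> cons_rel ar ops A2 F2"
    and "\<forall>c\<in>A1 - A2. generates ar ops A1 c"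
  shows "maximal_wrt ar ops A1 F1 A2 F2"
  unfolding maximal_wrt_def
proof (intro conjI allI impI)
  show "cons_rel ar ops A1 F1 \<subset> cons_rel ar ops A2 F2"
    using cons_rel_subalgebra[OF assms(1-3)] assms(4) by blast
  fix \<phi>
  assume "wf_fm ar \<phi>" "({}, \<phi>) \<in> cons_rel ar ops A2 F2" "({}, \<phi>) \<notin> cons_rel ar ops A1 F1"
  then show "cons_plus ar ops A1 F1 \<phi> = cons_rel ar ops A2 F2"
    using cons_plus_subset_cons_rel[OF assms(1-3)] cons_rel_subset_cons_plus[OF assms(2,3,5)]
    by blast
qed

lemma generates_if_constants_and_transfers_definable:
  assumes A1: "A1 = {zero, one} \<union> a ` {1..n}" and i: "i \<in> {1..n}"
    and verum: "wf_fm ar verum" "\<And>v. \<forall>m. v m \<in> A1 \<Longrightarrow> eval ops v verum = one"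
    and falsum: "wf_fm ar falsum" "\<And>v. \<forall>m. v m \<in> A1 \<Longrightarrow> eval ops v falsum = zero"
    and transfer: "\<And>j. 1 \<le> j \<Longrightarrow> j \<le> n \<Longrightarrow> i \<noteq> j \<Longrightarrow>
        wf_fm ar (\<alpha> j) \<and> (\<forall>v. (\<forall>m. v m \<in> A1) \<longrightarrow> v P = a i \<longrightarrow> eval ops v (\<alpha> j) = a j)"
  shows "generates ar ops A1 (a i)"
  unfolding generates_def
proof
  fix c
  assume "c \<in> A1"
  then consider "c = zero" | "c = one" | "c = a i" | j where "j \<in> {1..n}" "i \<noteq> j" "c = a j"
    using A1 by blast
  moreover have const: "\<forall>m. (\<lambda>_. a i) m \<in> A1"
    using A1 i by blast
  ultimately show "\<exists>t. wf_fm ar t \<and> eval ops (\<lambda>_. a i) t = c"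
  proof cases
    case 1
    then show ?thesis
      using falsum(1) falsum(2)[OF const] by blast
  next
    case 2
    then show ?thesis
      using verum(1) verum(2)[OF const] by blast
  next
    case 3
    then show ?thesis
      by (intro exI[of _ "Var 0"]) simp
  next
    case 4
    then show ?thesis
      using transfer[of j] const by auto
  qed
qed

theorem theorem2p2:
  fixes ar :: "'f \<Rightarrow> nat" and ops :: "'f \<Rightarrow> 'a list \<Rightarrow> 'a"
    and A1 A2 F1 F2 :: "'a set" and zero one :: 'a and a :: "nat \<Rightarrow> 'a" and k n P :: nat
    and top bot :: "'f fm" and \<alpha> :: "nat \<Rightarrow> nat \<Rightarrow> 'f fm"
  assumes alg1: "closed_alg ar ops A1"
    and fin1: "finite A1"
    and F1: "F1 \<noteq> {}" "F1 \<subseteq> A1"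
    and sub: "A2 \<subseteq> A1" "closed_alg ar ops A2"
    and F2: "F2 = F1 \<inter> A2" "F2 \<noteq> {}"
    and distinct: "cons_rel ar ops A1 F1 \<noteq> cons_rel ar ops A2 F2"
    and kn: "k \<le> n"
    and A1_eq: "A1 = {zero, one} \<union> a ` {1..n}"
    and A2_eq: "A2 = {zero, one} \<union> a ` {1..k}"
    and elems_distinct: "zero \<noteq> one" "inj_on a {1..n}" "zero \<notin> a ` {1..n}" "one \<notin> a ` {1..n}"
    and zero_F1: "zero \<notin> F1"
    and one_F2: "one \<in> F2"
    and sub01: "closed_alg ar ops {zero, one}"
    and top: "wf_fm ar top" "vars top \<subseteq> {P}" "\<And>v. (\<forall>m. v m \<in> A1) \<Longrightarrow> eval ops v top = one"
    and bot: "wf_fm ar bot" "vars bot \<subseteq> {P}" "\<And>v. (\<forall>m. v m \<in> A1) \<Longrightarrow> eval ops v bot = zero"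
    and alpha: "\<And>i j. k + 1 \<le> i \<Longrightarrow> i \<le> n \<Longrightarrow> 1 \<le> j \<Longrightarrow> j \<le> n \<Longrightarrow> i \<noteq> j \<Longrightarrow>
        wf_fm ar (\<alpha> i j) \<and> vars (\<alpha> i j) \<subseteq> {P} \<and>
        (\<forall>v. (\<forall>m. v m \<in> A1) \<longrightarrow> v P = a i \<longrightarrow> eval ops v (\<alpha> i j) = a j)"
  shows "maximal_wrt ar ops A1 F1 A2 F2"
proof (rule maximal_wrt_if_outside_elements_generate[OF sub F2(1) distinct], intro ballI)
  fix c
  assume "c \<in> A1 - A2"
  then obtain i where i: "i \<in> {1..n}" and c: "c = a i" and "c \<notin> a ` {1..k}"
    using A1_eq A2_eq by blast
  then have "k + 1 \<le> i"
    by (cases "i \<le> k") auto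
  show "generates ar ops A1 c"
    unfolding c
    by (rule generates_if_constants_and_transfers_definable[OF A1_eq i(1) top(1,3) bot(1,3)])
      (use alpha i \<open>k + 1 \<le> i\<close> in auto)
qed

end
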